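(* Let $k\in\mathbb{R}$ and $\epsilon\in(0,1)$. There exists a polynomial $p_{\mathrm{gauss},k,n}$ of degree $$n=\left\lceil\sqrt{8\left\lceil\max\{\ln(2/\epsilon),\,k^2e^2/2\}\right\rceil\ln(4/\epsilon)}\right\rceil$$ such that $\max_{x\in[-1,1]}\left|p_{\mathrm{gauss},k,n}(x)-e^{-(kx)^2}\right|\le\epsilon$. *)

theory Defs
  imports Complex_Main "HOL-Computational_Algebra.Polynomial"
begin

end

(*
  With lam = k^2/2 and y = 2 x^2 - 1 in [-1, 1] we have exp (-(k x)^2) = exp (-lam) * exp (-lam y).
  Truncating the Taylor series of exp (-lam y) after B terms costs at most exp lam * lam^B / B!.
  Writing y = cos phi, each power y^j = 2^-j * sum_i (j choose i) T_|j-2i| (y) is the mean of the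
  Chebyshev polynomial T_|j-2i| under a binomial distribution of i; dropping the terms with
  |j - 2i| > d costs at most 2 exp (-(d+1)^2 / (2j)) by Hoeffding's inequality. For the given B and
  d both errors are at most exp lam * eps / 2, and the resulting polynomial has degree d in y,
  hence degree 2d <= n in x.
*)
theory Submission
  imports Defs "HOL-Probability.Hoeffding"
begin

fun cheb_poly :: "nat \<Rightarrow> real poly" where
  "cheb_poly 0 = 1"
| "cheb_poly (Suc 0) = [:0, 1:]"
| "cheb_poly (Suc (Suc n)) = [:0, 2:] * cheb_poly (Suc n) - cheb_poly n"

lemma cheb_poly_cos: "poly (cheb_poly n) (cos t) = cos (real n * t)"
proof (induction n rule: cheb_poly.induct)
  case (3 n)
  have "cos (real (Suc (Suc n)) * t) = 2 * cos t * cos (real (Suc n) * t) - cos (real n * t)"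
    using cos_add[of "real (Suc n) * t" t] cos_diff[of "real (Suc n) * t" t]
    by (simp add: algebra_simps)
  with 3 show ?case by simp
qed auto

lemma cheb_poly_abs_cos: "poly (cheb_poly (nat \<bar>k\<bar>)) (cos t) = cos (of_int k * t)"
  by (cases "k \<ge> 0") (simp_all add: cheb_poly_cos)

lemma degree_cheb_poly: "degree (cheb_poly n) \<le> n"
proof (induction n rule: cheb_poly.induct)
  case (3 n)
  have "degree ([:0, 2:] * cheb_poly (Suc n)) \<le> Suc (Suc n)"
    using degree_mult_le[of "[:0, 2:]" "cheb_poly (Suc n)"] 3(1) by simp
  with 3(2) show ?case by (simp add: degree_diff_le)
qed auto

lemma cos_power_binomial:
  "cos \<phi> ^ j = (\<Sum>i\<le>j. real (j choose i) * cos ((real j - 2 * real i) * \<phi>)) / 2 ^ j"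
proof -
  have "complex_of_real (2 * cos \<phi>) = cis (- \<phi>) + cis \<phi>"
    by (simp add: complex_eq_iff)
  then have "(2 * cos \<phi>) ^ j = Re ((cis (- \<phi>) + cis \<phi>) ^ j)"
    by (metis Re_complex_of_real of_real_power)
  also have "(cis (- \<phi>) + cis \<phi>) ^ j = (\<Sum>i\<le>j. of_nat (j choose i) * cis ((real j - 2 * real i) * \<phi>))"
  proof (unfold binomial_ring, intro sum.cong refl)
    fix i assume "i \<in> {..j}"
    then have "real i * - \<phi> + real (j - i) * \<phi> = (real j - 2 * real i) * \<phi>"
      by (simp add: of_nat_diff algebra_simps)
    then show "of_nat (j choose i) * cis (- \<phi>) ^ i * cis \<phi> ^ (j - i)
        = of_nat (j choose i) * cis ((real j - 2 * real i) * \<phi>)"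
      by (simp only: Complex.DeMoivre cis_mult mult.assoc)
  qed
  finally show ?thesis
    by (simp add: power_mult_distrib field_simps)
qed

lemma sum_binomial_tail_le:
  fixes j :: nat and m :: real
  assumes "0 < j" "0 \<le> m"
  shows "(\<Sum>i | i \<le> j \<and> m \<le> \<bar>real j - 2 * real i\<bar>. real (j choose i))
           \<le> 2 ^ j * (2 * exp (- (m^2) / (2 * real j)))"
proof -
  define A where "A = {i. i \<le> j \<and> m \<le> \<bar>real j - 2 * real i\<bar>}"
  define P where "P = measure_pmf.prob (binomial_pmf j (1/2)) {x. \<bar>real x - real j * (1/2)\<bar> \<ge> m / 2}"
  have "P \<le> 2 * exp (-2 * (m / 2)^2 / real j)"
    unfolding P_def using assms
    by (intro binomial_distribution.prob_abs_ge) (auto simp: binomial_distribution_def)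
  also have "-2 * (m / 2)^2 / real j = - (m^2) / (2 * real j)"
    by (simp add: power_divide)
  finally have P_le: "P \<le> 2 * exp (- (m^2) / (2 * real j))" .
  have "P = measure_pmf.prob (binomial_pmf j (1/2)) A"
    unfolding P_def
    by (subst (1 2) measure_Int_set_pmf[symmetric])
       (auto simp: A_def abs_if intro!: arg_cong[where f = "measure_pmf.prob _"])
  also have "\<dots> = (\<Sum>i\<in>A. real (j choose i)) / 2 ^ j"
    by (subst measure_measure_pmf_finite)
       (auto simp: A_def power_divide power_add[symmetric] sum_divide_distrib)
  finally have "(\<Sum>i\<in>A. real (j choose i)) = 2 ^ j * P"
    by simp
  with P_le show ?thesis
    unfolding A_def by (simp add: mult_left_mono)
qed

definition cheb_trunc :: "nat \<Rightarrow> nat \<Rightarrow> real poly" where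
  "cheb_trunc d j = smult (1 / 2 ^ j)
     (\<Sum>i | i \<le> j \<and> \<bar>int j - 2 * int i\<bar> \<le> int d.
        smult (real (j choose i)) (cheb_poly (nat \<bar>int j - 2 * int i\<bar>)))"

lemma cheb_trunc_0 [simp]: "cheb_trunc d 0 = 1"
proof -
  have "{i. i \<le> 0 \<and> \<bar>int 0 - 2 * int i\<bar> \<le> int d} = {0}"
    by auto
  then show ?thesis
    by (simp add: cheb_trunc_def)
qed

lemma degree_cheb_trunc: "degree (cheb_trunc d j) \<le> d"
  unfolding cheb_trunc_def
  by (intro order.trans[OF degree_smult_le] degree_sum_le order.trans[OF degree_cheb_poly]) auto

lemma cheb_trunc_error:
  assumes "0 < j" "\<bar>y\<bar> \<le> 1"
  shows "\<bar>poly (cheb_trunc d j) y - y ^ j\<bar> \<le> 2 * exp (- ((real d + 1)^2) / (2 * real j))"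
proof -
  define \<phi> where "\<phi> = arccos y"
  have y: "y = cos \<phi>"
    using assms by (simp add: \<phi>_def)
  define S where "S = {i. i \<le> j \<and> \<bar>int j - 2 * int i\<bar> \<le> int d}"
  define g where "g i = real (j choose i) * cos ((real j - 2 * real i) * \<phi>)" for i
  have "poly (cheb_trunc d j) y = (\<Sum>i\<in>S. g i) / 2 ^ j"
    by (simp add: cheb_trunc_def poly_sum y cheb_poly_abs_cos S_def g_def)
  moreover have "(\<Sum>i\<le>j. g i) = (\<Sum>i\<in>S. g i) + (\<Sum>i\<in>{..j} - S. g i)"
    by (subst sum.subset_diff[of S]) (auto simp: S_def)
  then have "y ^ j = ((\<Sum>i\<in>S. g i) + (\<Sum>i\<in>{..j} - S. g i)) / 2 ^ j"
    by (simp add: y g_def cos_power_binomial)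
  ultimately have diff: "\<bar>poly (cheb_trunc d j) y - y ^ j\<bar> = \<bar>\<Sum>i\<in>{..j} - S. g i\<bar> / 2 ^ j"
    by (simp add: abs_divide flip: diff_divide_distrib)
  have tail: "real d + 1 \<le> \<bar>real j - 2 * real i\<bar>" if "i \<notin> S" "i \<le> j" for i
  proof -
    have "int d + 1 \<le> \<bar>int j - 2 * int i\<bar>"
      using that by (auto simp: S_def)
    then have "real_of_int (int d + 1) \<le> real_of_int \<bar>int j - 2 * int i\<bar>"
      by (simp only: of_int_le_iff)
    then show ?thesis
      by simp
  qed
  have "\<bar>\<Sum>i\<in>{..j} - S. g i\<bar> \<le> (\<Sum>i\<in>{..j} - S. real (j choose i))"
    by (intro order.trans[OF sum_abs] sum_mono) (auto simp: g_def abs_mult mult_left_le)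
  also have "\<dots> \<le> (\<Sum>i | i \<le> j \<and> real d + 1 \<le> \<bar>real j - 2 * real i\<bar>. real (j choose i))"
    by (intro sum_mono2) (auto intro: tail)
  also have "\<dots> \<le> 2 ^ j * (2 * exp (- ((real d + 1)^2) / (2 * real j)))"
    using assms by (intro sum_binomial_tail_le) auto
  finally have "\<bar>\<Sum>i\<in>{..j} - S. g i\<bar> / 2 ^ j
      \<le> 2 ^ j * (2 * exp (- ((real d + 1)^2) / (2 * real j))) / 2 ^ j"
    by (rule divide_right_mono) simp
  then show ?thesis
    unfolding diff by simp
qed

lemma cheb_trunc_error_le_half:
  assumes "j \<le> B" "\<bar>y\<bar> \<le> 1" "0 < \<epsilon>" "2 * real B * ln (4 / \<epsilon>) \<le> (real d + 1)^2"
  shows "\<bar>poly (cheb_trunc d j) y - y ^ j\<bar> \<le> \<epsilon> / 2"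
proof (cases "j = 0")
  case True
  with assms show ?thesis
    by simp
next
  case False
  have "2 * real j * ln (4 / \<epsilon>) \<le> (real d + 1)^2"
  proof (cases "0 \<le> ln (4 / \<epsilon>)")
    case True
    then have "2 * real j * ln (4 / \<epsilon>) \<le> 2 * real B * ln (4 / \<epsilon>)"
      using assms(1) by (intro mult_right_mono) auto
    with assms(4) show ?thesis
      by linarith
  next
    case False
    then have "2 * real j * ln (4 / \<epsilon>) \<le> 0"
      by (simp add: mult_nonneg_nonpos)
    then show ?thesis
      using zero_le_power2[of "real d + 1"] by linarith
  qed
  with False have "exp (- ((real d + 1)^2) / (2 * real j)) \<le> exp (- ln (4 / \<epsilon>))"
    by (simp add: field_simps)
  also have "\<dots> = \<epsilon> / 4"
    using assms(3) by (simp add: exp_minus)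
  finally show ?thesis
    using cheb_trunc_error[of j y d] False assms(2) by linarith
qed

lemma sum_power_div_fact_le_exp:
  fixes x :: real
  assumes "0 \<le> x"
  shows "(\<Sum>m<n. x ^ m / fact m) \<le> exp x"
proof -
  obtain t where "exp x = (\<Sum>m<n. x ^ m / fact m) + exp t / fact n * x ^ n"
    using Maclaurin_exp_le[of x n] by blast
  moreover have "0 \<le> exp t / fact n * x ^ n"
    using assms by simp
  ultimately show ?thesis
    by linarith
qed

lemma power_div_fact_le_exp_neg:
  fixes x :: real
  assumes "0 \<le> x" "exp 1 ^ 2 * x \<le> real n"
  shows "x ^ n / fact n \<le> exp (- real n)"
proof (cases "n = 0")
  case True
  then show ?thesis
    by simp
next
  case False
  then have n: "0 < real n"
    by simp
  have "real n ^ n / fact n \<le> (\<Sum>m<Suc n. real n ^ m / fact m)"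
    by (rule member_le_sum) auto
  also have "\<dots> \<le> exp (real n)"
    by (rule sum_power_div_fact_le_exp) simp
  finally have fact_ge: "real n ^ n / fact n \<le> exp 1 ^ n"
    by (simp add: exp_of_nat_mult[symmetric])
  have "x ^ n / fact n = (x / real n) ^ n * (real n ^ n / fact n)"
    using n by (simp add: power_divide)
  also have "\<dots> \<le> (x / real n) ^ n * exp 1 ^ n"
    using fact_ge assms(1) by (intro mult_left_mono) auto
  also have "\<dots> = (exp 1 * x / real n) ^ n"
    by (simp add: power_divide power_mult_distrib)
  also have "\<dots> \<le> exp (-1) ^ n"
  proof (rule power_mono)
    have "exp 1 * (exp 1 * x) \<le> real n"
      using assms(2) by (simp add: power2_eq_square mult.assoc)
    then show "exp 1 * x / real n \<le> exp (-1)"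
      using n by (simp add: exp_minus field_simps)
  qed (use assms(1) in simp)
  also have "\<dots> = exp (- real n)"
    by (simp add: exp_of_nat_mult[symmetric])
  finally show ?thesis .
qed

lemma exp_taylor_approx:
  fixes lam y \<delta> :: real and q :: "nat \<Rightarrow> real"
  assumes "0 \<le> lam" "\<bar>y\<bar> \<le> 1" "0 \<le> \<delta>" "\<And>j. j < B \<Longrightarrow> \<bar>q j - y ^ j\<bar> \<le> \<delta>"
  shows "\<bar>(\<Sum>j<B. (- lam) ^ j / fact j * q j) - exp (- lam * y)\<bar> \<le> exp lam * (\<delta> + lam ^ B / fact B)"
proof -
  obtain t where t: "\<bar>t\<bar> \<le> \<bar>- lam * y\<bar>"
    and exp_eq: "exp (- lam * y) = (\<Sum>j<B. (- lam * y) ^ j / fact j) + exp t / fact B * (- lam * y) ^ B"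
    using Maclaurin_exp_le[of "- lam * y" B] by blast
  have lam_y: "\<bar>- lam * y\<bar> \<le> lam"
    using assms(1,2) by (simp add: abs_mult mult_left_le)
  have "\<bar>\<Sum>j<B. (- lam) ^ j / fact j * (q j - y ^ j)\<bar> \<le> (\<Sum>j<B. lam ^ j / fact j * \<delta>)"
  proof (intro order.trans[OF sum_abs] sum_mono)
    fix j assume "j \<in> {..<B}"
    then have "lam ^ j / fact j * \<bar>q j - y ^ j\<bar> \<le> lam ^ j / fact j * \<delta>"
      using assms(1,4) by (intro mult_left_mono) auto
    then show "\<bar>(- lam) ^ j / fact j * (q j - y ^ j)\<bar> \<le> lam ^ j / fact j * \<delta>"
      using assms(1) by (simp add: abs_mult power_abs)
  qed
  also have "\<dots> = (\<Sum>j<B. lam ^ j / fact j) * \<delta>"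
    by (simp add: sum_distrib_right)
  also have "\<dots> \<le> exp lam * \<delta>"
    using sum_power_div_fact_le_exp[OF assms(1)] assms(3) by (rule mult_right_mono)
  finally have taylor_le: "\<bar>\<Sum>j<B. (- lam) ^ j / fact j * (q j - y ^ j)\<bar> \<le> exp lam * \<delta>" .
  have "exp t \<le> exp lam"
    using t lam_y by simp
  have "\<bar>exp t / fact B * (- lam * y) ^ B\<bar> = exp t / fact B * \<bar>- lam * y\<bar> ^ B"
    by (simp add: abs_mult power_abs)
  also have "\<dots> \<le> exp lam / fact B * lam ^ B"
    using \<open>exp t \<le> exp lam\<close> lam_y by (intro mult_mono divide_right_mono power_mono) auto
  finally have rem_le: "\<bar>exp t / fact B * (- lam * y) ^ B\<bar> \<le> exp lam * (lam ^ B / fact B)"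
    by simp
  have "(\<Sum>j<B. (- lam) ^ j / fact j * q j) - exp (- lam * y)
      = (\<Sum>j<B. (- lam) ^ j / fact j * (q j - y ^ j)) - exp t / fact B * (- lam * y) ^ B"
    unfolding exp_eq power_mult_distrib by (simp add: right_diff_distrib sum_subtractf)
  then have "\<bar>(\<Sum>j<B. (- lam) ^ j / fact j * q j) - exp (- lam * y)\<bar>
      \<le> \<bar>\<Sum>j<B. (- lam) ^ j / fact j * (q j - y ^ j)\<bar> + \<bar>exp t / fact B * (- lam * y) ^ B\<bar>"
    by (simp only: abs_triangle_ineq4)
  with taylor_le rem_le show ?thesis
    unfolding distrib_left by linarith
qed

definition gauss_approx :: "real \<Rightarrow> nat \<Rightarrow> nat \<Rightarrow> real poly" where
  "gauss_approx k B d = smult (exp (- (k^2 / 2)))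
     (pcompose (\<Sum>j<B. smult ((- (k^2 / 2)) ^ j / fact j) (cheb_trunc d j)) [:-1, 0, 2:])"

lemma degree_gauss_approx: "degree (gauss_approx k B d) \<le> 2 * d"
proof -
  have "degree (\<Sum>j<B. smult ((- (k^2 / 2)) ^ j / fact j) (cheb_trunc d j)) \<le> d"
    by (intro degree_sum_le order.trans[OF degree_smult_le] degree_cheb_trunc) auto
  then show ?thesis
    unfolding gauss_approx_def
    by (intro order.trans[OF degree_smult_le]) (simp add: degree_pcompose)
qed

lemma gauss_approx_error:
  assumes "\<bar>x\<bar> \<le> 1" "0 < \<epsilon>"
    and "exp 1 ^ 2 * (k^2 / 2) \<le> real B" "ln (2 / \<epsilon>) \<le> real B"
    and "2 * real B * ln (4 / \<epsilon>) \<le> (real d + 1)^2"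
  shows "\<bar>poly (gauss_approx k B d) x - exp (- ((k * x)^2))\<bar> \<le> \<epsilon>"
proof -
  define lam where "lam = k^2 / 2"
  define y where "y = 2 * x^2 - 1"
  have y: "\<bar>y\<bar> \<le> 1"
    using assms(1) by (simp add: y_def abs_le_iff abs_square_le_1)
  have gauss: "exp (- ((k * x)^2)) = exp (- lam) * exp (- lam * y)"
    by (simp add: lam_def y_def power_mult_distrib algebra_simps flip: exp_add)
  have poly: "poly (gauss_approx k B d) x = exp (- lam) * (\<Sum>j<B. (- lam) ^ j / fact j * poly (cheb_trunc d j) y)"
    by (simp add: gauss_approx_def poly_pcompose poly_sum lam_def y_def power2_eq_square algebra_simps)
  have "lam ^ B / fact B \<le> exp (- real B)"
    using assms(3) by (intro power_div_fact_le_exp_neg) (auto simp: lam_def)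
  also have "\<dots> \<le> exp (- ln (2 / \<epsilon>))"
    using assms(4) by simp
  also have "\<dots> = \<epsilon> / 2"
    using assms(2) by (simp add: exp_minus)
  finally have tail: "lam ^ B / fact B \<le> \<epsilon> / 2" .
  define s where "s = (\<Sum>j<B. (- lam) ^ j / fact j * poly (cheb_trunc d j) y)"
  have "\<bar>s - exp (- lam * y)\<bar> \<le> exp lam * (\<epsilon> / 2 + lam ^ B / fact B)"
    unfolding s_def using y assms(2) cheb_trunc_error_le_half[OF _ y assms(2,5)]
    by (intro exp_taylor_approx) (auto simp: lam_def)
  also have "\<dots> \<le> exp lam * \<epsilon>"
    using tail by (intro mult_left_mono) (linarith, simp)
  finally have "exp (- lam) * \<bar>s - exp (- lam * y)\<bar> \<le> exp (- lam) * (exp lam * \<epsilon>)"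
    by (rule mult_left_mono) simp
  also have "\<dots> = \<epsilon>"
    by (simp add: mult.assoc[symmetric] flip: exp_add)
  also have "exp (- lam) * \<bar>s - exp (- lam * y)\<bar> = \<bar>poly (gauss_approx k B d) x - exp (- ((k * x)^2))\<bar>"
    unfolding poly gauss s_def by (simp add: abs_mult flip: right_diff_distrib)
  finally show ?thesis .
qed

theorem lemma9:
  fixes k \<epsilon> :: real
  assumes "0 < \<epsilon>" and "\<epsilon> < 1"
  defines "n \<equiv> nat \<lceil>sqrt (8 * real_of_int \<lceil>max (ln (2 / \<epsilon>)) (k^2 * (exp 1)^2 / 2)\<rceil> * ln (4 / \<epsilon>))\<rceil>"
  shows "\<exists>p :: real poly. degree p \<le> n \<and>
           (\<forall>x \<in> {-1..1}. \<bar>poly p x - exp (- ((k * x)^2))\<bar> \<le> \<epsilon>)"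
proof -
  define B where "B = nat \<lceil>max (ln (2 / \<epsilon>)) (k^2 * (exp 1)^2 / 2)\<rceil>"
  define d where "d = n div 2"
  have "0 < ln (2 / \<epsilon>)"
    using assms(1,2) by simp
  then have B_eq: "real B = real_of_int \<lceil>max (ln (2 / \<epsilon>)) (k^2 * (exp 1)^2 / 2)\<rceil>"
    unfolding B_def by (simp add: max_def)
  have B_ge: "max (ln (2 / \<epsilon>)) (k^2 * (exp 1)^2 / 2) \<le> real B"
    unfolding B_def by (rule real_nat_ceiling_ge)
  have "sqrt (8 * real B * ln (4 / \<epsilon>)) \<le> real n"
    unfolding n_def B_eq by (rule real_nat_ceiling_ge)
  then have "8 * real B * ln (4 / \<epsilon>) \<le> (real n)^2"
    by (rule sqrt_le_D)
  also have "\<dots> \<le> (2 * (real d + 1))^2"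
  proof (rule power_mono)
    have "n \<le> 2 * (d + 1)"
      unfolding d_def by presburger
    then show "real n \<le> 2 * (real d + 1)"
      using of_nat_mono[of n "2 * (d + 1)"] by simp
  qed simp
  also have "\<dots> = 4 * (real d + 1)^2"
    by (simp only: power_mult_distrib) simp
  finally have d: "2 * real B * ln (4 / \<epsilon>) \<le> (real d + 1)^2"
    by linarith
  show ?thesis
  proof (intro exI conjI ballI)
    show "degree (gauss_approx k B d) \<le> n"
      using degree_gauss_approx[of k B d] unfolding d_def by linarith
    fix x :: real
    assume "x \<in> {-1..1}"
    then show "\<bar>poly (gauss_approx k B d) x - exp (- ((k * x)^2))\<bar> \<le> \<epsilon>"
      using assms(1) B_ge d by (intro gauss_approx_error) (auto simp: abs_le_iff mult_ac)
  qed
qed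

end
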